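(* Assume the standing setting below and run the DMFW algorithm with $\eta_k=\frac{2}{k+2}$ (and any $\gamma_k\in(0,1]$). Then for every $i\in\mathcal N$ and $k\ge1$, $$\|\hat x_{k+1}^i-\hat x_k^i\|\le\frac{2(D+2C_1)}{k+2},\qquad C_1=k_0\sqrt nD.$$
   Context: Setting. There are $n$ agents $\mathcal N=\{1,\dots,n\}$ connected by a connected graph $\mathcal G=(\mathcal N,\mathcal E)$ with weight matrix $C=[c_{ij}]\in\mathbb R^{n\times n}$, where $c_{ij}\ge 0$ and $c_{ij}=0$ whenever $j\ne i$ and $(i,j)\notin\mathcal E$. $C$ is doubly stochastic, i.e. all row sums and all column sums equal $1$. Let $\lambda$ be the second largest eigenvalue of $C$ in magnitude. It is assumed that $|\lambda|<1$ and that for all vectors $x^1,\dots,x^n\in\mathbb R^p$, with $\bar x=\frac1n\sum_i x^i$ and $\hat x^i=\sum_j c_{ij}x^j$, one has $\big(\sum_i\|\hat x^i-\bar x\|^2\big)^{1/2}\le|\lambda|\big(\sum_i\|x^i-\bar x\|^2\big)^{1/2}$. Let $k_0$ be the smallest positive integer with $|\lambda|\le (k_0/(k_0+1))^2$. Problem data. $\mathcal X\subset\mathbb R^p$ is convex and compact with diameter $D$, i.e. $\|x-x'\|\le D$ for all $x,x'\in\mathcal X$. For each $i$, $\xi^i$ is a random variable. The function $f_i(\cdot,\xi)$ is differentiable with $L$-Lipschitz gradient for every $\xi$. $F_i(x)=\mathbb E[f_i(x,\xi^i)]$ is differentiable with $\nabla F_i(x)=\mathbb E[\nabla f_i(x,\xi^i)]$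 and $L$-Lipschitz gradient. For all $x\in\mathcal X$ and $i$, $\mathbb E\|\nabla F_i(x)-\nabla f_i(x,\xi^i)\|^2\le\delta^2$. Set $F=\frac1n\sum_{i=1}^nF_i$. DMFW algorithm. Fix step sizes $\gamma_k,\eta_k\in(0,1]$ and deterministic initial points $x_1^i\in\mathcal X$. The samples $\xi_k^i$ ($k\ge1$, $i\in\mathcal N$) are mutually independent, and $\xi_k^i$ has the distribution of $\xi^i$. For $k=1,2,\dots$ and each $i$: - $\hat x_k^i=\sum_{j=1}^n c_{ij}x_k^j$. - For $k=1$: $y_1^i=s_1^i=\nabla f_i(\hat x_1^i,\xi_1^i)$. For $k\ge2$: $y_k^i=(1-\gamma_k)y_{k-1}^i+\nabla f_i(\hat x_k^i,\xi_k^i)-(1-\gamma_k)\nabla f_i(\hat x_{k-1}^i,\xi_k^i)$ and $s_k^i=\sum_j c_{ij}s_{k-1}^j+y_k^i-y_{k-1}^i$. - $p_k^i=\sum_j c_{ij}s_k^j$. - $\theta_k^i\in\arg\min_{\phi\in\mathcal X}\langle p_k^i,\phi\rangle$. - $x_{k+1}^i=\hat x_k^i+\eta_k(\theta_k^i-\hat x_k^i)$. Notation: $\bar x_k=\frac1n\sum_i x_k^i$. *)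

theory Defs
  imports "HOL-Analysis.Analysis"
begin

definition doubly_stochastic :: "nat \<Rightarrow> (nat \<Rightarrow> nat \<Rightarrow> real) \<Rightarrow> bool" where
  "doubly_stochastic n C \<longleftrightarrow>
     (\<forall>i<n. \<forall>j<n. 0 \<le> C i j) \<and>
     (\<forall>i<n. (\<Sum>j<n. C i j) = 1) \<and>
     (\<forall>j<n. (\<Sum>i<n. C i j) = 1)"

definition connected_graph :: "nat \<Rightarrow> (nat \<times> nat) set \<Rightarrow> bool" where
  "connected_graph n E \<longleftrightarrow>
     E \<subseteq> {..<n} \<times> {..<n} \<and> sym E \<and>
     (\<forall>i<n. \<forall>j<n. (i, j) \<in> E\<^sup>*)"

definition avg :: "nat \<Rightarrow> (nat \<Rightarrow> 'a::real_vector) \<Rightarrow> 'a" where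
  "avg n z = (1 / real n) *\<^sub>R (\<Sum>i<n. z i)"

definition mix :: "nat \<Rightarrow> (nat \<Rightarrow> nat \<Rightarrow> real) \<Rightarrow> (nat \<Rightarrow> 'a::real_vector) \<Rightarrow> nat \<Rightarrow> 'a" where
  "mix n C z i = (\<Sum>j<n. C i j *\<^sub>R z j)"

text \<open>Contraction property of the mixing matrix with factor lam (= |lambda|).\<close>
definition mixing_contraction :: "nat \<Rightarrow> (nat \<Rightarrow> nat \<Rightarrow> real) \<Rightarrow> real \<Rightarrow> 'a::real_normed_vector itself \<Rightarrow> bool" where
  "mixing_contraction n C lam _ \<longleftrightarrow>
     (\<forall>z :: nat \<Rightarrow> 'a.
        sqrt (\<Sum>i<n. (norm (mix n C z i - avg n z))\<^sup>2)
          \<le> lam * sqrt (\<Sum>i<n. (norm (z i - avg n z))\<^sup>2))"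

definition k0_of :: "real \<Rightarrow> nat" where
  "k0_of lam = (LEAST k::nat. 0 < k \<and> lam \<le> (real k / (real k + 1))\<^sup>2)"

end

theory Submission
  imports Defs
begin

text \<open>
  Mixing with a doubly stochastic matrix preserves the network average, and each Frank-Wolfe
  update moves the average by at most \<open>\<eta>\<^sub>k D\<close>. For the consensus error \<open>E\<^sub>k\<close> of the
  mixed iterates and \<open>e\<^sub>k\<close> of the unmixed ones, the contraction gives \<open>E\<^sub>k \<le> \<lambda> e\<^sub>k\<close>,
  the diameter gives \<open>e\<^sub>k \<le> \<surd>n D\<close>, and convexity of the update gives
  \<open>e\<^sub>k\<^sub>+\<^sub>1 \<le> (1 - \<eta>\<^sub>k) E\<^sub>k + \<eta>\<^sub>k \<surd>n D\<close>. The defining property of \<open>k\<^sub>0\<close> turns this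
  recursion into \<open>E\<^sub>k \<le> 2 k\<^sub>0 \<surd>n D / (k + 2)\<close>, and comparing both mixed iterates with
  their averages yields the bound.
\<close>

lemma k0_of_spec:
  assumes "lam < 1"
  shows "0 < k0_of lam \<and> lam \<le> (real (k0_of lam) / (real (k0_of lam) + 1))\<^sup>2"
proof -
  define m where "m = nat \<lceil>2 / (1 - lam)\<rceil>"
  have m_ge: "2 / (1 - lam) \<le> real m" unfolding m_def by linarith
  have "0 < 2 / (1 - lam)" using assms by simp
  then have m_pos: "0 < m" using m_ge by linarith
  have "2 \<le> real m * (1 - lam)"
    using m_ge assms by (simp add: divide_le_eq)
  then have "2 \<le> (real m + 1) * (1 - lam)"
    using assms by (simp add: algebra_simps)
  then have "2 / (real m + 1) \<le> 1 - lam"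
    by (simp add: divide_le_eq mult.commute)
  then have "lam \<le> 1 - 2 / (real m + 1)"
    by linarith
  also have "\<dots> \<le> (real m / (real m + 1))\<^sup>2"
    by (simp add: divide_simps power2_eq_square) (simp add: algebra_simps)
  finally have "0 < m \<and> lam \<le> (real m / (real m + 1))\<^sup>2"
    using m_pos by simp
  then show ?thesis
    unfolding k0_of_def by (rule LeastI)
qed

lemma sq_ratio_le_rate:
  fixes K k :: real
  assumes "0 \<le> k" "k \<le> K"
  shows "(K / (K + 1))\<^sup>2 \<le> 2 * K / (k + 2)"
proof -
  have "(K / (K + 1))\<^sup>2 \<le> K / (K + 1)"
    using assms unfolding power2_eq_square by (intro mult_left_le) auto
  also have "\<dots> \<le> 2 * K / (K + 2)"
    using assms by (simp add: divide_simps) (simp add: algebra_simps)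
  also have "\<dots> \<le> 2 * K / (k + 2)"
    using assms by (intro divide_left_mono) auto
  finally show ?thesis .
qed

lemma sq_ratio_rate_step:
  fixes K k :: real
  assumes "0 \<le> k" "0 \<le> K" "K \<le> k + 2"
  shows "(K / (K + 1))\<^sup>2 * ((1 - 2 / (k + 2)) * (2 * K / (k + 2)) + 2 / (k + 2))
           \<le> 2 * K / (k + 3)"
proof -
  have collect: "(1 - 2 / (k + 2)) * (2 * K / (k + 2)) + 2 / (k + 2) = 2 * (k * K + k + 2) / (k + 2)\<^sup>2"
    using assms(1) by (simp add: divide_simps power2_eq_square)
  have "(k * K + k + 2) * (K * (k + 3)) \<le> ((K + 1) * (k + 2)) * ((K + 1) * (k + 2))"
    by (rule mult_mono) (use assms in \<open>auto simp: algebra_simps\<close>)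
  then show ?thesis
    unfolding collect using assms by (simp add: divide_simps power2_eq_square) (simp add: algebra_simps)
qed

lemma contracted_recursion_step:
  fixes k K lam B E :: real
  assumes "0 \<le> k" "0 \<le> K" "K \<le> k + 2" "0 \<le> lam" "lam \<le> (K / (K + 1))\<^sup>2"
    and "0 \<le> B" "0 \<le> E" "E \<le> 2 * K * B / (k + 2)"
  shows "lam * ((1 - 2 / (k + 2)) * E + 2 / (k + 2) * B) \<le> 2 * K * B / (k + 3)"
proof -
  let ?r = "(1 - 2 / (k + 2)) * (2 * K / (k + 2)) + 2 / (k + 2)"
  have weight_nonneg: "0 \<le> 1 - 2 / (k + 2)"
    using assms(1) by (simp add: field_simps)
  have "(1 - 2 / (k + 2)) * E + 2 / (k + 2) * B \<le> (1 - 2 / (k + 2)) * (2 * K * B / (k + 2)) + 2 / (k + 2) * B"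
    using weight_nonneg assms(8) by (intro add_right_mono mult_left_mono)
  also have "\<dots> = ?r * B"
    by (simp add: algebra_simps)
  finally have "lam * ((1 - 2 / (k + 2)) * E + 2 / (k + 2) * B) \<le> (K / (K + 1))\<^sup>2 * (?r * B)"
    using assms weight_nonneg by (intro mult_mono) auto
  also have "\<dots> \<le> 2 * K / (k + 3) * B"
    unfolding mult.assoc[symmetric] using assms by (intro mult_right_mono sq_ratio_rate_step) auto
  finally show ?thesis by simp
qed

text \<open>
  The bound \<open>E\<^sub>k \<le> \<lambda> B\<close> suffices while \<open>k \<le> K\<close>; afterwards the recursion propagates
  the rate because \<open>K \<le> k\<close>.
\<close>

lemma contracted_recursion_rate:
  fixes E e :: "nat \<Rightarrow> real" and K :: nat
  assumes lam: "0 \<le> lam" "lam \<le> (real K / (real K + 1))\<^sup>2" and B: "0 \<le> B"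
    and E_nonneg: "\<And>m. 0 \<le> E m"
    and E_le: "\<And>m. 1 \<le> m \<Longrightarrow> E m \<le> lam * e m"
    and e_le: "\<And>m. 1 \<le> m \<Longrightarrow> e m \<le> B"
    and e_step: "\<And>m. 1 \<le> m \<Longrightarrow> e (m + 1) \<le> (1 - 2 / (real m + 2)) * E m + 2 / (real m + 2) * B"
    and m: "1 \<le> m"
  shows "E m \<le> 2 * real K * B / (real m + 2)"
  using m
proof (induction m rule: nat_induct_at_least)
  have bound_by_lam: "E m \<le> 2 * real K * B / (real m + 2)" if "1 \<le> m" "m \<le> K" for m
  proof -
    have "E m \<le> lam * B"
      using E_le[OF that(1)] e_le[OF that(1)] lam by (meson mult_left_mono order_trans)
    also have "\<dots> \<le> 2 * real K / (real m + 2) * B"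
      using lam B that by (intro mult_right_mono order_trans[OF _ sq_ratio_le_rate]) auto
    finally show ?thesis by simp
  qed
  case base
  show ?case
  proof (cases K)
    case 0
    then show ?thesis using E_le[of 1] lam by simp
  qed (use bound_by_lam[of 1] in simp)
  case (Suc m)
  show ?case
  proof (cases "m + 1 \<le> K")
    case True
    then show ?thesis using bound_by_lam[of "m + 1"] by simp
  next
    case False
    have "E (Suc m) \<le> lam * e (Suc m)"
      using E_le[of "Suc m"] by simp
    also have "\<dots> \<le> lam * ((1 - 2 / (real m + 2)) * E m + 2 / (real m + 2) * B)"
      using e_step[OF Suc.hyps] lam(1) by (simp add: mult_left_mono)
    also have "\<dots> \<le> 2 * real K * B / (real m + 3)"
      using False lam B E_nonneg[of m] Suc.IH by (intro contracted_recursion_step) auto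
    finally show ?thesis by (simp add: add.commute)
  qed
qed

lemma avg_cong: "(\<And>i. i < n \<Longrightarrow> z i = w i) \<Longrightarrow> avg n z = avg n w"
  unfolding avg_def by simp

lemma avg_linear: "avg n (\<lambda>i. a *\<^sub>R z i + b *\<^sub>R w i) = a *\<^sub>R avg n z + b *\<^sub>R avg n w"
  unfolding avg_def by (simp add: sum.distrib scaleR_sum_right algebra_simps)

lemma avg_mem_convex:
  assumes "convex X" "0 < n" "\<And>i. i < n \<Longrightarrow> z i \<in> X"
  shows "avg n z \<in> X"
  unfolding avg_def scaleR_sum_right using assms by (intro convex_sum) auto

lemma avg_mix:
  assumes "doubly_stochastic n C"
  shows "avg n (mix n C z) = avg n z"
proof -
  have "(\<Sum>i<n. mix n C z i) = (\<Sum>j<n. (\<Sum>i<n. C i j) *\<^sub>R z j)"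
    unfolding mix_def scaleR_sum_left by (rule sum.swap)
  also have "\<dots> = (\<Sum>j<n. z j)"
    using assms unfolding doubly_stochastic_def by simp
  finally show ?thesis unfolding avg_def by simp
qed

lemma mix_mem_convex:
  assumes "doubly_stochastic n C" "convex X" "\<And>j. j < n \<Longrightarrow> z j \<in> X" "i < n"
  shows "mix n C z i \<in> X"
  unfolding mix_def using assms by (intro convex_sum) (auto simp: doubly_stochastic_def)

lemma norm_diff_le_via_centers:
  fixes u v a b :: "'a::real_normed_vector"
  shows "norm (u - v) \<le> norm (u - a) + norm (v - b) + norm (a - b)"
proof -
  have "norm (u - v) = norm ((u - a) - (v - b) + (a - b))" by simp
  then show ?thesis
    using norm_triangle_ineq[of "(u - a) - (v - b)" "a - b"] norm_triangle_ineq4[of "u - a" "v - b"]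
    by linarith
qed

definition consensus_error :: "nat \<Rightarrow> (nat \<Rightarrow> 'a::real_normed_vector) \<Rightarrow> real" where
  "consensus_error n z = L2_set (\<lambda>i. norm (z i - avg n z)) {..<n}"

lemma consensus_error_nonneg: "0 \<le> consensus_error n z"
  unfolding consensus_error_def by (rule L2_set_nonneg)

lemma consensus_error_cong:
  "(\<And>i. i < n \<Longrightarrow> z i = w i) \<Longrightarrow> consensus_error n z = consensus_error n w"
  unfolding consensus_error_def using avg_cong[of n z w] by (intro L2_set_cong) auto

lemma norm_sub_avg_le_consensus_error:
  "i < n \<Longrightarrow> norm (z i - avg n z) \<le> consensus_error n z"
  unfolding consensus_error_def by (intro member_le_L2_set) auto

lemma consensus_error_mix_le:
  assumes "doubly_stochastic n C" "mixing_contraction n C lam TYPE('a::real_normed_vector)"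
  shows "consensus_error n (mix n C (z :: nat \<Rightarrow> 'a)) \<le> lam * consensus_error n z"
  using assms(2) unfolding mixing_contraction_def consensus_error_def L2_set_def avg_mix[OF assms(1)]
  by blast

lemma consensus_error_convex_comb_le:
  assumes "0 \<le> t" "t \<le> 1"
  shows "consensus_error n (\<lambda>i. (1 - t) *\<^sub>R u i + t *\<^sub>R v i)
           \<le> (1 - t) * consensus_error n u + t * consensus_error n v"
proof -
  have "consensus_error n (\<lambda>i. (1 - t) *\<^sub>R u i + t *\<^sub>R v i)
          \<le> L2_set (\<lambda>i. (1 - t) * norm (u i - avg n u) + t * norm (v i - avg n v)) {..<n}"
    unfolding consensus_error_def avg_linear
  proof (rule L2_set_mono)
    fix i
    have "(1 - t) *\<^sub>R u i + t *\<^sub>R v i - ((1 - t) *\<^sub>R avg n u + t *\<^sub>R avg n v)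
            = (1 - t) *\<^sub>R (u i - avg n u) + t *\<^sub>R (v i - avg n v)"
      by (simp add: algebra_simps)
    then show "norm ((1 - t) *\<^sub>R u i + t *\<^sub>R v i - ((1 - t) *\<^sub>R avg n u + t *\<^sub>R avg n v))
                 \<le> (1 - t) * norm (u i - avg n u) + t * norm (v i - avg n v)"
      using assms norm_triangle_ineq[of "(1 - t) *\<^sub>R (u i - avg n u)" "t *\<^sub>R (v i - avg n v)"]
      by simp
  qed simp
  also have "\<dots> \<le> L2_set (\<lambda>i. (1 - t) * norm (u i - avg n u)) {..<n}
                  + L2_set (\<lambda>i. t * norm (v i - avg n v)) {..<n}"
    by (rule L2_set_triangle_ineq)
  also have "\<dots> = (1 - t) * consensus_error n u + t * consensus_error n v"
    using assms unfolding consensus_error_def by (simp add: L2_set_right_distrib)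
  finally show ?thesis .
qed

lemma consensus_error_le_diameter:
  assumes "convex X" "\<forall>u\<in>X. \<forall>v\<in>X. norm (u - v) \<le> D" "\<And>i. i < n \<Longrightarrow> z i \<in> X"
  shows "consensus_error n z \<le> sqrt (real n) * D"
proof (cases "n = 0")
  case False
  have avg_in: "avg n z \<in> X" using assms False by (intro avg_mem_convex) auto
  then have "0 \<le> D" using assms(2) by force
  have "consensus_error n z \<le> L2_set (\<lambda>_. D) {..<n}"
    unfolding consensus_error_def using assms avg_in by (intro L2_set_mono) auto
  also have "\<dots> = sqrt (real n) * D" using \<open>0 \<le> D\<close> by (simp add: L2_set_constant)
  finally show ?thesis .
qed (simp add: consensus_error_def)

text \<open>
  Only the mixing and Frank-Wolfe updates enter the bound: the gradient-tracking variables
  matter only through the linear minimisers \<open>\<theta>\<close>, which merely have to lie in \<open>X\<close>.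
\<close>

locale dmfw_iterates =
  fixes n :: nat and C :: "nat \<Rightarrow> nat \<Rightarrow> real" and lam D :: real
    and X :: "'a::real_normed_vector set" and \<eta> :: "nat \<Rightarrow> real"
    and x xh \<theta> :: "nat \<Rightarrow> nat \<Rightarrow> 'a"
  assumes doubly_stochastic: "doubly_stochastic n C"
    and contraction: "mixing_contraction n C lam TYPE('a)"
    and lam_nonneg: "0 \<le> lam" and lam_lt1: "lam < 1"
    and convex: "convex X"
    and diam: "\<forall>u\<in>X. \<forall>v\<in>X. norm (u - v) \<le> D"
    and eta: "\<And>k. 1 \<le> k \<Longrightarrow> \<eta> k = 2 / (real k + 2)"
    and init: "\<And>i. i < n \<Longrightarrow> x 1 i \<in> X"
    and xh_mix: "\<And>k i. 1 \<le> k \<Longrightarrow> i < n \<Longrightarrow> xh k i = mix n C (x k) i"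
    and theta_mem: "\<And>k i. 1 \<le> k \<Longrightarrow> i < n \<Longrightarrow> \<theta> k i \<in> X"
    and x_step: "\<And>k i. 1 \<le> k \<Longrightarrow> i < n \<Longrightarrow> x (k + 1) i = xh k i + \<eta> k *\<^sub>R (\<theta> k i - xh k i)"
begin

lemma eta_bounds: "1 \<le> k \<Longrightarrow> 0 \<le> \<eta> k \<and> \<eta> k \<le> 1"
  using eta by simp

lemma x_step_convex_comb:
  "1 \<le> k \<Longrightarrow> i < n \<Longrightarrow> x (k + 1) i = (1 - \<eta> k) *\<^sub>R xh k i + \<eta> k *\<^sub>R \<theta> k i"
  using x_step by (simp add: algebra_simps)

lemma iterates_mem:
  assumes "1 \<le> k" "i < n"
  shows "x k i \<in> X \<and> xh k i \<in> X"
  using assms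
proof (induction k arbitrary: i rule: nat_induct_at_least)
  have mixed_mem: "xh k i \<in> X" if "1 \<le> k" "i < n" "\<And>j. j < n \<Longrightarrow> x k j \<in> X" for k i
    using that xh_mix doubly_stochastic convex by (simp add: mix_mem_convex)
  case base
  then show ?case using init mixed_mem by simp
  case (Suc k)
  have "x (Suc k) j \<in> X" if "j < n" for j
    using x_step_convex_comb[OF Suc.hyps that] Suc.IH[OF that] theta_mem[OF Suc.hyps that]
      eta_bounds[OF Suc.hyps] convex
    by (simp add: convexD)
  then show ?case using mixed_mem Suc by simp
qed

lemma avg_mixed: "1 \<le> k \<Longrightarrow> avg n (xh k) = avg n (x k)"
  using xh_mix avg_cong[of n "xh k" "mix n C (x k)"] avg_mix[OF doubly_stochastic] by simp

lemma avg_mixed_step_le: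
  assumes "1 \<le> k" "0 < n"
  shows "norm (avg n (xh (k + 1)) - avg n (xh k)) \<le> \<eta> k * D"
proof -
  have "avg n (x (k + 1)) = (1 - \<eta> k) *\<^sub>R avg n (xh k) + \<eta> k *\<^sub>R avg n (\<theta> k)"
    using x_step_convex_comb[OF assms(1)] avg_cong[of n "x (k + 1)"] by (simp add: avg_linear)
  then have "avg n (xh (k + 1)) - avg n (xh k) = \<eta> k *\<^sub>R (avg n (\<theta> k) - avg n (xh k))"
    using avg_mixed assms(1) by (simp add: algebra_simps)
  moreover have "avg n (\<theta> k) \<in> X" "avg n (xh k) \<in> X"
    using assms theta_mem iterates_mem convex by (auto intro: avg_mem_convex)
  ultimately show ?thesis
    using diam eta_bounds[OF assms(1)] by (simp add: mult_left_mono)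
qed

lemma diameter_scale_nonneg: "0 \<le> sqrt (real n) * D"
proof (cases "n = 0")
  case False
  then show ?thesis using diam init[of 0] by force
qed simp

lemma consensus_error_mixed_le:
  assumes "1 \<le> k"
  shows "consensus_error n (xh k) \<le> 2 * real (k0_of lam) * (sqrt (real n) * D) / (real k + 2)"
proof (rule contracted_recursion_rate[where E = "\<lambda>k. consensus_error n (xh k)"
    and e = "\<lambda>k. consensus_error n (x k)" and lam = lam])
  show "consensus_error n (xh m) \<le> lam * consensus_error n (x m)" if "1 \<le> m" for m
    using consensus_error_cong[of n "xh m" "mix n C (x m)"] xh_mix[OF that]
      consensus_error_mix_le[OF doubly_stochastic contraction] by simp
  show "consensus_error n (x m) \<le> sqrt (real n) * D" if "1 \<le> m" for m
    using convex diam iterates_mem[OF that] by (intro consensus_error_le_diameter) auto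
  show "consensus_error n (x (m + 1))
          \<le> (1 - 2 / (real m + 2)) * consensus_error n (xh m) + 2 / (real m + 2) * (sqrt (real n) * D)"
    if "1 \<le> m" for m
  proof -
    have "consensus_error n (x (m + 1))
            = consensus_error n (\<lambda>i. (1 - \<eta> m) *\<^sub>R xh m i + \<eta> m *\<^sub>R \<theta> m i)"
      using x_step_convex_comb[OF that] by (intro consensus_error_cong) simp
    also have "\<dots> \<le> (1 - \<eta> m) * consensus_error n (xh m) + \<eta> m * consensus_error n (\<theta> m)"
      using eta_bounds[OF that] by (intro consensus_error_convex_comb_le) auto
    also have "\<dots> \<le> (1 - \<eta> m) * consensus_error n (xh m) + \<eta> m * (sqrt (real n) * D)"
      using eta_bounds[OF that] theta_mem[OF that] convex diam
      by (intro add_left_mono mult_left_mono consensus_error_le_diameter) auto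
    finally show ?thesis using eta[OF that] by simp
  qed
qed (use k0_of_spec[OF lam_lt1] lam_nonneg diameter_scale_nonneg consensus_error_nonneg assms in auto)

theorem mixed_iterate_step_le:
  assumes "1 \<le> k" "i < n"
  shows "norm (xh (k + 1) i - xh k i)
           \<le> 2 * (D + 2 * (real (k0_of lam) * sqrt (real n) * D)) / (real k + 2)"
proof -
  let ?B = "2 * real (k0_of lam) * (sqrt (real n) * D)"
  have "0 \<le> ?B"
    using diameter_scale_nonneg by simp
  have "norm (xh (k + 1) i - avg n (xh (k + 1))) \<le> ?B / (real (k + 1) + 2)"
    using assms by (intro order_trans[OF norm_sub_avg_le_consensus_error consensus_error_mixed_le]) auto
  also have "\<dots> \<le> ?B / (real k + 2)"
    using \<open>0 \<le> ?B\<close> by (intro divide_left_mono) auto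
  finally have next_dev: "norm (xh (k + 1) i - avg n (xh (k + 1))) \<le> ?B / (real k + 2)" .
  have dev: "norm (xh k i - avg n (xh k)) \<le> ?B / (real k + 2)"
    using assms by (intro order_trans[OF norm_sub_avg_le_consensus_error consensus_error_mixed_le])
  have "norm (xh (k + 1) i - xh k i)
          \<le> norm (xh (k + 1) i - avg n (xh (k + 1))) + norm (xh k i - avg n (xh k))
             + norm (avg n (xh (k + 1)) - avg n (xh k))"
    by (rule norm_diff_le_via_centers)
  also have "\<dots> \<le> ?B / (real k + 2) + ?B / (real k + 2) + 2 / (real k + 2) * D"
    using next_dev dev avg_mixed_step_le[OF assms(1)] eta[OF assms(1)] assms by (intro add_mono) auto
  also have "\<dots> = 2 * (D + 2 * (real (k0_of lam) * sqrt (real n) * D)) / (real k + 2)"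
    by (simp add: add_divide_distrib[symmetric] algebra_simps)
  finally show ?thesis .
qed

end

theorem lemma7:
  fixes n :: nat
    and E :: "(nat \<times> nat) set"
    and C :: "nat \<Rightarrow> nat \<Rightarrow> real"
    and lam :: real \<comment> \<open>modulus |lambda| of the second largest eigenvalue of C\<close>
    and X :: "'a::euclidean_space set"
    and D L :: real
    and f :: "nat \<Rightarrow> 'a \<Rightarrow> 'b \<Rightarrow> real"
    and g :: "nat \<Rightarrow> 'a \<Rightarrow> 'b \<Rightarrow> 'a" \<comment> \<open>g i x xi = gradient of f i (.) xi at x\<close>
    and \<xi> :: "nat \<Rightarrow> nat \<Rightarrow> 'b" \<comment> \<open>realized samples xi k i\<close>
    and \<gamma> \<eta> :: "nat \<Rightarrow> real"
    and x xh y s p \<theta> :: "nat \<Rightarrow> nat \<Rightarrow> 'a" \<comment> \<open>iterates indexed (k, i)\<close>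
  assumes graph: "connected_graph n E"
    and C_ds: "doubly_stochastic n C"
    and C_graph: "\<forall>i<n. \<forall>j<n. j \<noteq> i \<and> (i, j) \<notin> E \<longrightarrow> C i j = 0"
    and lam_nonneg: "0 \<le> lam" and lam_lt1: "lam < 1"
    and contraction: "mixing_contraction n C lam TYPE('a)"
    and X_convex: "convex X" and X_compact: "compact X"
    and diam: "\<forall>u\<in>X. \<forall>v\<in>X. norm (u - v) \<le> D"
    and grad: "\<forall>i<n. \<forall>z u. ((\<lambda>v. f i v z) has_derivative (\<lambda>h. g i u z \<bullet> h)) (at u)"
    and lipschitz: "\<forall>i<n. \<forall>z u v. norm (g i u z - g i v z) \<le> L * norm (u - v)"
    and gamma: "\<forall>k\<ge>1. 0 < \<gamma> k \<and> \<gamma> k \<le> 1"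
    and eta: "\<forall>k\<ge>1. \<eta> k = 2 / (real k + 2)"
    and init: "\<forall>i<n. x 1 i \<in> X"
    and xh_def: "\<forall>k\<ge>1. \<forall>i<n. xh k i = (\<Sum>j<n. C i j *\<^sub>R x k j)"
    and y1: "\<forall>i<n. y 1 i = g i (xh 1 i) (\<xi> 1 i)"
    and s1: "\<forall>i<n. s 1 i = y 1 i"
    and yk: "\<forall>k\<ge>2. \<forall>i<n. y k i = (1 - \<gamma> k) *\<^sub>R y (k - 1) i + g i (xh k i) (\<xi> k i)
                                   - (1 - \<gamma> k) *\<^sub>R g i (xh (k - 1) i) (\<xi> k i)"
    and sk: "\<forall>k\<ge>2. \<forall>i<n. s k i = (\<Sum>j<n. C i j *\<^sub>R s (k - 1) j) + y k i - y (k - 1) i"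
    and pk: "\<forall>k\<ge>1. \<forall>i<n. p k i = (\<Sum>j<n. C i j *\<^sub>R s k j)"
    and theta: "\<forall>k\<ge>1. \<forall>i<n. \<theta> k i \<in> X \<and> (\<forall>\<phi>\<in>X. p k i \<bullet> \<theta> k i \<le> p k i \<bullet> \<phi>)"
    and xk: "\<forall>k\<ge>1. \<forall>i<n. x (k + 1) i = xh k i + \<eta> k *\<^sub>R (\<theta> k i - xh k i)"
  shows "\<forall>i<n. \<forall>k\<ge>1.
           norm (xh (k + 1) i - xh k i)
             \<le> 2 * (D + 2 * (real (k0_of lam) * sqrt (real n) * D)) / (real k + 2)"
proof -
  interpret dmfw_iterates n C lam D X \<eta> x xh \<theta>
    by unfold_locales
      (use C_ds contraction lam_nonneg lam_lt1 X_convex diam eta init xh_def theta xk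
        in \<open>simp_all add: mix_def\<close>)
  show ?thesis
    using mixed_iterate_step_le by blast
qed

end
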